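(* Let $\Sigma=(X,\mathcal D,\phi)$ be an RFC system. If there is a bounded set $\mathcal A\subset X$ such that $\Sigma$ possesses a non-coercive Lyapunov function with respect to $\mathcal A$, then $\Sigma$ is practically UGAS, i.e. there exist $\beta\in\mathcal{KL}$ and $c>0$ such that $\|\phi(t,x,d)\|\le\beta(\|x\|,t)+c$ for all $x\in X$, $d\in\mathcal D$, $t\ge0$.
   Context: $\mathbb R_+=[0,\infty)$. A system is a triple $\Sigma=(X,\mathcal D,\phi)$ where $(X,\|\cdot\|)$ is a normed linear space; $D$ is a nonempty subset of some normed linear space; $\mathcal D$ is a set of functions $d:\mathbb R_+\to D$ closed under time shifts $d\mapsto d(\cdot+\tau)$, $\tau\ge0$, and under concatenation ($d(s)=d_1(s)$ for $s\in[0,t]$, $d(s)=d_2(s-t)$ for $s>t$, any $d_1,d_2\in\mathcal D$, $t>0$); and $\phi:\mathbb R_+\times X\times\mathcal D\to X$ is an everywhere defined map with $\phi(0,x,d)=x$; $\phi(t,x,d)=\phi(t,x,\tilde d)$ whenever $d=\tilde d$ on $[0,t]$; $t\mapsto\phi(t,x,d)$ continuous; and $\phi(h,\phi(t,x,d),d(t+\cdot))=\phi(t+h,x,d)$ for all $t,h\ge0$. $\Sigma$ is RFC if for all $C,\tau>0$: $\sup\{\|\phi(t,x,d)\|:\|x\|\le C,d\in\mathcal D,t\in[0,\tau]\}<\infty$. $\|x\|_{\mathcal A}=\inf_{y\in\mathcal A}\|x-y\|$. $\mathcal K$: continuous strictly increasing $\gamma:\mathbb R_+\to\mathbb R_+$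 with $\gamma(0)=0$; $\mathcal K_\infty$: unbounded elements of $\mathcal K$; $\mathcal{KL}$: continuous $\beta:\mathbb R_+^2\to\mathbb R_+$ with $\beta(\cdot,t)\in\mathcal K$ for all $t$ and $\beta(r,\cdot)$ strictly decreasing to $0$ for all $r>0$. For continuous $V:X\to\mathbb R$, $x\in X$, $d\in\mathcal D$, define the Dini derivative $\dot V_d(x)=\liminf_{t\to0^+}\frac1t\big(V(\phi(t,x,d))-V(x)\big)$. A continuous $V:X\to\mathbb R_+$ is a non-coercive Lyapunov function for $\Sigma$ w.r.t. a bounded set $\mathcal A$ if $V(x)=0$ for $x\in\mathcal A$ and there are $\psi_2\in\mathcal K_\infty$, $\alpha\in\mathcal K$ with $0<V(x)\le\psi_2(\|x\|_{\mathcal A})$ for all $x\in X\setminus\mathcal A$ and $\dot V_d(x)\le-\alpha(\|x\|_{\mathcal A})$ for all $x\in X\setminus\mathcal A$, $d\in\mathcal D$. *)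

theory Defs
  imports "HOL-Analysis.Analysis"
begin

definition class_K :: "(real \<Rightarrow> real) \<Rightarrow> bool" where
  "class_K \<gamma> \<longleftrightarrow> continuous_on {0..} \<gamma> \<and> strict_mono_on {0..} \<gamma> \<and> \<gamma> 0 = 0"

definition class_K_inf :: "(real \<Rightarrow> real) \<Rightarrow> bool" where
  "class_K_inf \<gamma> \<longleftrightarrow> class_K \<gamma> \<and> (\<forall>M. \<exists>r\<ge>0. \<gamma> r > M)"

definition class_KL :: "(real \<Rightarrow> real \<Rightarrow> real) \<Rightarrow> bool" where
  "class_KL \<beta> \<longleftrightarrow>
     continuous_on ({0..} \<times> {0..}) (\<lambda>(r, t). \<beta> r t) \<and>
     (\<forall>t\<ge>0. class_K (\<lambda>r. \<beta> r t)) \<and>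
     (\<forall>r>0. (\<forall>s t. 0 \<le> s \<longrightarrow> s < t \<longrightarrow> \<beta> r t < \<beta> r s) \<and>
             ((\<lambda>t. \<beta> r t) \<longlongrightarrow> 0) at_top)"

text \<open>Systems. Inputs are total functions real => 'd; only their values on [0,inf) matter.
  DS is the input set, Dset the value set D, phi the flow.\<close>

definition is_system ::
  "'d::real_normed_vector set \<Rightarrow> (real \<Rightarrow> 'd) set \<Rightarrow> (real \<Rightarrow> 'x::real_normed_vector \<Rightarrow> (real \<Rightarrow> 'd) \<Rightarrow> 'x) \<Rightarrow> bool"
where
  "is_system Dset DS \<phi> \<longleftrightarrow>
     Dset \<noteq> {} \<and>
     (\<forall>d\<in>DS. \<forall>s\<ge>0. d s \<in> Dset) \<and>
     (\<forall>d\<in>DS. \<forall>\<tau>\<ge>0. (\<lambda>s. d (s + \<tau>)) \<in> DS) \<and>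
     (\<forall>d1\<in>DS. \<forall>d2\<in>DS. \<forall>t>0. (\<lambda>s. if s \<le> t then d1 s else d2 (s - t)) \<in> DS) \<and>
     (\<forall>x. \<forall>d\<in>DS. \<phi> 0 x d = x) \<and>
     (\<forall>t\<ge>0. \<forall>x. \<forall>d\<in>DS. \<forall>d'\<in>DS. (\<forall>s\<in>{0..t}. d s = d' s) \<longrightarrow> \<phi> t x d = \<phi> t x d') \<and>
     (\<forall>x. \<forall>d\<in>DS. continuous_on {0..} (\<lambda>t. \<phi> t x d)) \<and>
     (\<forall>x. \<forall>d\<in>DS. \<forall>t\<ge>0. \<forall>h\<ge>0. \<phi> h (\<phi> t x d) (\<lambda>s. d (t + s)) = \<phi> (t + h) x d)"

definition RFC :: "(real \<Rightarrow> 'd) set \<Rightarrow> (real \<Rightarrow> 'x::real_normed_vector \<Rightarrow> (real \<Rightarrow> 'd) \<Rightarrow> 'x) \<Rightarrow> bool" where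
  "RFC DS \<phi> \<longleftrightarrow> (\<forall>C>0. \<forall>\<tau>>0. \<exists>M. \<forall>x d t. norm x \<le> C \<longrightarrow> d \<in> DS \<longrightarrow> t \<in> {0..\<tau>} \<longrightarrow> norm (\<phi> t x d) \<le> M)"

definition dini_deriv ::
  "(real \<Rightarrow> 'x \<Rightarrow> (real \<Rightarrow> 'd) \<Rightarrow> 'x) \<Rightarrow> ('x \<Rightarrow> real) \<Rightarrow> 'x \<Rightarrow> (real \<Rightarrow> 'd) \<Rightarrow> ereal" where
  "dini_deriv \<phi> V x d = Liminf (at_right 0) (\<lambda>t. ereal ((V (\<phi> t x d) - V x) / t))"

definition noncoercive_lyapunov ::
  "(real \<Rightarrow> 'd) set \<Rightarrow> (real \<Rightarrow> 'x::real_normed_vector \<Rightarrow> (real \<Rightarrow> 'd) \<Rightarrow> 'x) \<Rightarrow> 'x set \<Rightarrow> ('x \<Rightarrow> real) \<Rightarrow> bool"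
where
  "noncoercive_lyapunov DS \<phi> A V \<longleftrightarrow>
     continuous_on UNIV V \<and> (\<forall>x. 0 \<le> V x) \<and> (\<forall>x\<in>A. V x = 0) \<and>
     (\<exists>\<psi>2 \<alpha>. class_K_inf \<psi>2 \<and> class_K \<alpha> \<and>
        (\<forall>x. x \<notin> A \<longrightarrow> 0 < V x \<and> V x \<le> \<psi>2 (infdist x A)) \<and>
        (\<forall>x. x \<notin> A \<longrightarrow> (\<forall>d\<in>DS. dini_deriv \<phi> V x d \<le> ereal (- \<alpha> (infdist x A)))))"

end

theory Submission
  imports Defs
begin

text \<open>Outside the unit neighbourhood of \<open>A\<close> the Lyapunov function decreases along every trajectory
  at rate at least \<open>\<alpha>(1)/2\<close>. So at each time \<open>t\<close> either \<open>t \<le> 2 V(x)/\<alpha>(1) \<le> 2 \<psi>(\<parallel>x\<parallel> + R)/\<alpha>(1)\<close>,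
  or the trajectory was in that neighbourhood, a bounded set, at most \<open>2 \<psi>(1)/\<alpha>(1)\<close> time units
  earlier, and RFC bounds it by a uniform constant. During the initial phase RFC bounds the state by
  a constant depending on \<open>\<parallel>x\<parallel>\<close> only; as that phase has length bounded in terms of \<open>\<parallel>x\<parallel>\<close>, this
  bound can be written as \<open>K(\<parallel>x\<parallel>) e\<^sup>-\<^sup>t\<close> with \<open>K\<close> continuous and strictly increasing.\<close>

lemma class_K_mono:
  assumes "class_K \<gamma>" "0 \<le> x" "x \<le> y"
  shows "\<gamma> x \<le> \<gamma> y"
  using assms unfolding class_K_def strict_mono_on_def by (cases "x = y") (auto intro: less_imp_le)

lemma class_K_nonneg: "class_K \<gamma> \<Longrightarrow> 0 \<le> x \<Longrightarrow> 0 \<le> \<gamma> x"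
  using class_K_mono[of \<gamma> 0 x] by (simp add: class_K_def)

lemma class_K_pos: "class_K \<gamma> \<Longrightarrow> 0 < x \<Longrightarrow> 0 < \<gamma> x"
  unfolding class_K_def strict_mono_on_def by (metis atLeast_iff order_refl less_imp_le)

lemma class_KL_nonneg: "class_KL \<beta> \<Longrightarrow> 0 \<le> r \<Longrightarrow> 0 \<le> t \<Longrightarrow> 0 \<le> \<beta> r t"
  unfolding class_KL_def using class_K_nonneg by blast

definition ramp :: "real \<Rightarrow> real" where
  "ramp u = max 0 (min 1 u)"

definition ramp_sum :: "(nat \<Rightarrow> real) \<Rightarrow> real \<Rightarrow> real" where
  "ramp_sum c r = r + (\<Sum>m<nat \<lceil>r\<rceil>. c m * ramp (r - real m))"

lemma ramp_sum_eq:
  assumes "r \<le> real N"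
  shows "ramp_sum c r = r + (\<Sum>m<N. c m * ramp (r - real m))"
proof -
  have "nat \<lceil>r\<rceil> \<le> N" using assms by linarith
  then have "(\<Sum>m<N. c m * ramp (r - real m)) = (\<Sum>m<nat \<lceil>r\<rceil>. c m * ramp (r - real m))"
    by (intro sum.mono_neutral_right) (auto simp: ramp_def)
  then show ?thesis by (simp add: ramp_sum_def)
qed

lemma ramp_sum_0 [simp]: "ramp_sum c 0 = 0"
  by (simp add: ramp_sum_def)

lemma continuous_on_ramp_sum: "continuous_on UNIV (ramp_sum c)"
proof -
  have "isCont (ramp_sum c) r" for r
  proof -
    define N where "N = nat \<lceil>\<bar>r\<bar>\<rceil> + 1"
    have "r < real N" unfolding N_def by linarith
    then have "eventually (\<lambda>x. ramp_sum c x = x + (\<Sum>m<N. c m * ramp (x - real m))) (nhds r)"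
      using eventually_nhds_in_open[of "{..<real N}" r] by (auto elim!: eventually_mono intro!: ramp_sum_eq)
    moreover have "isCont (\<lambda>x. x + (\<Sum>m<N. c m * ramp (x - real m))) r"
      unfolding ramp_def by (intro continuous_intros)
    ultimately show ?thesis by (simp add: isCont_cong)
  qed
  then show ?thesis by (simp add: continuous_on_eq_continuous_at)
qed

lemma ramp_sum_strict_mono:
  assumes "\<And>m. 0 \<le> c m"
  shows "strict_mono (ramp_sum c)"
proof (rule strict_monoI)
  fix r s :: real assume "r < s"
  define N where "N = nat \<lceil>\<bar>r\<bar>\<rceil> + nat \<lceil>\<bar>s\<bar>\<rceil>"
  have "r \<le> real N" "s \<le> real N" unfolding N_def by linarith+
  moreover have "(\<Sum>m<N. c m * ramp (r - real m)) \<le> (\<Sum>m<N. c m * ramp (s - real m))"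
    using assms \<open>r < s\<close> by (intro sum_mono mult_left_mono) (auto simp: ramp_def)
  ultimately show "ramp_sum c r < ramp_sum c s"
    using \<open>r < s\<close> ramp_sum_eq[of r N c] ramp_sum_eq[of s N c] by simp
qed

lemma ramp_sum_ge:
  assumes "\<And>m. 0 \<le> c m" and "real m + 1 \<le> r"
  shows "c m \<le> ramp_sum c r"
proof -
  define N where "N = nat \<lceil>r\<rceil>"
  have N: "r \<le> real N" "m < N" unfolding N_def using assms(2) by linarith+
  have "c m = c m * ramp (r - real m)" using assms(2) by (simp add: ramp_def)
  also have "\<dots> \<le> (\<Sum>m<N. c m * ramp (r - real m))"
    using N assms(1) by (intro member_le_sum) (auto simp: ramp_def)
  finally show ?thesis using N assms by (simp add: ramp_sum_eq)
qed

lemma class_KL_dominating: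
  fixes b :: "nat \<Rightarrow> real"
  shows "\<exists>\<beta>. class_KL \<beta> \<and> (\<forall>m r t. real m + 1 \<le> r \<longrightarrow> b m * exp (- t) \<le> \<beta> r t)"
proof -
  define c where "c m = max 0 (b m)" for m
  have c: "\<And>m. 0 \<le> c m" by (simp add: c_def)
  define \<beta> where "\<beta> r t = ramp_sum c r * exp (- t)" for r t
  have cont: "continuous_on UNIV (ramp_sum c)" by (rule continuous_on_ramp_sum)
  have mono: "strict_mono (ramp_sum c)" using c by (rule ramp_sum_strict_mono)
  have "class_KL \<beta>"
    unfolding class_KL_def
  proof (intro conjI allI impI)
    show "continuous_on ({0..} \<times> {0..}) (\<lambda>(r, t). \<beta> r t)"
      unfolding \<beta>_def case_prod_unfold
      by (intro continuous_intros continuous_on_compose2[OF cont]) auto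
    show "class_K (\<lambda>r. \<beta> r t)" for t
      unfolding class_K_def \<beta>_def
      using mono by (auto intro!: continuous_intros continuous_on_compose2[OF cont] simp: strict_mono_on_def strict_mono_def)
    fix r :: real assume "0 < r"
    then have "0 < ramp_sum c r" using mono strict_monoD by fastforce
    then show "\<beta> r t < \<beta> r s" if "s < t" for s t using that by (simp add: \<beta>_def)
    have "((\<lambda>t. exp (- t)) \<longlongrightarrow> (0::real)) at_top"
      using filterlim_compose[OF exp_at_bot filterlim_uminus_at_bot_at_top] by simp
    then show "((\<lambda>t. \<beta> r t) \<longlongrightarrow> 0) at_top"
      unfolding \<beta>_def by (rule tendsto_mult_right_zero)
  qed
  moreover have "b m * exp (- t) \<le> \<beta> r t" if "real m + 1 \<le> r" for m r t
  proof -
    have "b m \<le> c m" by (simp add: c_def)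
    also have "\<dots> \<le> ramp_sum c r" using ramp_sum_ge[OF c that] .
    finally show ?thesis by (simp add: \<beta>_def)
  qed
  ultimately show ?thesis by blast
qed

lemma last_time_below:
  fixes g :: "real \<Rightarrow> real"
  assumes "continuous_on {a..b} g" and "s \<in> {a..b}" and "g s \<le> c"
  obtains s0 where "s0 \<in> {a..b}" "g s0 \<le> c" "\<And>u. u \<in> {s0<..b} \<Longrightarrow> c < g u"
proof -
  define S where "S = {u \<in> {a..b}. g u \<le> c}"
  have "closed S"
    unfolding S_def using assms(1) by (intro continuous_on_closed_Collect_le) auto
  moreover have "S \<noteq> {}" and "bdd_above S"
    using assms(2,3) by (auto simp: S_def intro: bdd_aboveI[of _ b])
  ultimately have "Sup S \<in> S" and "\<And>u. u \<in> S \<Longrightarrow> u \<le> Sup S"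
    by (auto intro: closed_contains_Sup cSup_upper)
  moreover have "c < g u" if "u \<in> {Sup S<..b}" for u
  proof -
    have "u \<notin> S" using that \<open>\<And>u. u \<in> S \<Longrightarrow> u \<le> Sup S\<close> by force
    moreover have "a \<le> u" using that \<open>Sup S \<in> S\<close> by (auto simp: S_def)
    ultimately show ?thesis using that by (auto simp: S_def)
  qed
  ultimately show thesis
    using that[of "Sup S"] by (auto simp: S_def)
qed

lemma decrease_from_dini_bound:
  fixes v :: "real \<Rightarrow> real"
  assumes "a \<le> b" and cont: "continuous_on {a..b} v"
    and dini: "\<And>u. u \<in> {a<..<b} \<Longrightarrow> Liminf (at_right 0) (\<lambda>h. ereal ((v (u + h) - v u) / h)) < ereal (- k)"
  shows "v b + k * b \<le> v a + k * a"
proof (rule ccontr)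
  define w where "w u = v u + k * u" for u
  define c where "c = (w a + w b) / 2"
  assume "\<not> v b + k * b \<le> v a + k * a"
  then have wa: "w a < c" and wb: "c < w b" by (auto simp: w_def c_def algebra_simps)
  have w_cont: "continuous_on {a..b} w" unfolding w_def by (intro continuous_intros cont)
  then obtain u0 where u0: "u0 \<in> {a..b}" "w u0 \<le> c" and above: "\<And>u. u \<in> {u0<..b} \<Longrightarrow> c < w u"
    using last_time_below[of a b w a c] \<open>a \<le> b\<close> wa by auto
  have "u0 \<noteq> b" using u0 wb by auto
  moreover have "u0 \<noteq> a"
  proof
    assume "u0 = a"
    obtain \<delta> where "\<delta> > 0" and \<delta>: "\<And>u. u \<in> {a..b} \<Longrightarrow> dist u a < \<delta> \<Longrightarrow> dist (w u) (w a) < c - w a"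
      using w_cont \<open>a \<le> b\<close> wa unfolding continuous_on_iff by (metis atLeastAtMost_iff diff_gt_0_iff_gt order_refl)
    define u where "u = min (a + \<delta> / 2) b"
    have "u \<in> {a<..b}" using \<open>\<delta> > 0\<close> \<open>u0 = a\<close> \<open>u0 \<noteq> b\<close> \<open>a \<le> b\<close> by (auto simp: u_def)
    moreover have "dist u a < \<delta>"
      using \<open>\<delta> > 0\<close> \<open>a \<le> b\<close> unfolding u_def dist_real_def by (simp add: abs_if min_def)
    then have "w u < c" using \<delta>[of u] \<open>u \<in> {a<..b}\<close> by (simp add: dist_real_def abs_less_iff)
    ultimately show False using above \<open>u0 = a\<close> by force
  qed
  ultimately have "u0 \<in> {a<..<b}" using u0 by auto
  have "eventually (\<lambda>h. ereal (- k) \<le> ereal ((v (u0 + h) - v u0) / h)) (at_right 0)"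
    unfolding eventually_at_right_field
  proof (intro exI[of _ "b - u0"] conjI allI impI)
    show "0 < b - u0" using \<open>u0 \<in> {a<..<b}\<close> by simp
    fix h :: real assume h: "0 < h" "h < b - u0"
    then have "w u0 < w (u0 + h)" using above[of "u0 + h"] u0(2) by auto
    then show "ereal (- k) \<le> ereal ((v (u0 + h) - v u0) / h)"
      using h by (simp add: w_def field_simps)
  qed
  from Liminf_mono[OF this] have "ereal (- k) \<le> Liminf (at_right 0) (\<lambda>h. ereal ((v (u0 + h) - v u0) / h))"
    by (simp add: Liminf_const)
  then show False using dini[OF \<open>u0 \<in> {a<..<b}\<close>] by simp
qed

lemma infdist_bounded_set:
  fixes A :: "'a::real_normed_vector set"
  assumes "bounded A" and "A \<noteq> {}"
  obtains R where "\<And>x. infdist x A \<le> norm x + R" and "\<And>x. norm x \<le> infdist x A + R"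
proof -
  obtain R where R: "\<And>a. a \<in> A \<Longrightarrow> norm a \<le> R" using \<open>bounded A\<close> bounded_iff by blast
  obtain a0 where "a0 \<in> A" using \<open>A \<noteq> {}\<close> by blast
  have "infdist x A \<le> norm x + R" for x
    using infdist_le[OF \<open>a0 \<in> A\<close>, of x] R[OF \<open>a0 \<in> A\<close>] norm_triangle_ineq4[of x a0]
    by (simp add: dist_norm)
  moreover have "norm x \<le> infdist x A + R" for x
  proof -
    have "norm x - R \<le> dist x a" if "a \<in> A" for a
      using R[OF that] norm_triangle_ineq2[of x a] by (simp add: dist_norm)
    then have "norm x - R \<le> infdist x A"
      unfolding infdist_notempty[OF \<open>A \<noteq> {}\<close>] by (intro cINF_greatest \<open>A \<noteq> {}\<close>)
    then show ?thesis by simp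
  qed
  ultimately show thesis by (rule that)
qed

lemma is_system_shift:
  assumes "is_system Dset DS \<phi>" "d \<in> DS" "0 \<le> \<tau>"
  shows "(\<lambda>s. d (\<tau> + s)) \<in> DS"
proof -
  have "(\<lambda>s. d (s + \<tau>)) \<in> DS" using assms unfolding is_system_def by blast
  then show ?thesis by (simp add: add.commute)
qed

lemma is_system_cocycle:
  "is_system Dset DS \<phi> \<Longrightarrow> d \<in> DS \<Longrightarrow> 0 \<le> t \<Longrightarrow> 0 \<le> h \<Longrightarrow> \<phi> h (\<phi> t x d) (\<lambda>s. d (t + s)) = \<phi> (t + h) x d"
  unfolding is_system_def by blast

lemma is_system_initial: "is_system Dset DS \<phi> \<Longrightarrow> d \<in> DS \<Longrightarrow> \<phi> 0 x d = x"
  unfolding is_system_def by blast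

lemma is_system_continuous: "is_system Dset DS \<phi> \<Longrightarrow> d \<in> DS \<Longrightarrow> continuous_on {0..} (\<lambda>t. \<phi> t x d)"
  unfolding is_system_def by blast

lemma dini_deriv_along_trajectory:
  assumes "is_system Dset DS \<phi>" "d \<in> DS" "0 \<le> u"
  shows "dini_deriv \<phi> V (\<phi> u x d) (\<lambda>s. d (u + s))
           = Liminf (at_right 0) (\<lambda>h. ereal ((V (\<phi> (u + h) x d) - V (\<phi> u x d)) / h))"
proof -
  have "eventually (\<lambda>h. ereal ((V (\<phi> h (\<phi> u x d) (\<lambda>s. d (u + s))) - V (\<phi> u x d)) / h)
                      = ereal ((V (\<phi> (u + h) x d) - V (\<phi> u x d)) / h)) (at_right 0)"
    unfolding eventually_at_right_field
    by (rule exI[of _ 1]) (simp add: is_system_cocycle[OF assms])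
  then show ?thesis unfolding dini_deriv_def by (rule Liminf_eq)
qed

lemma RFC_bound:
  assumes "RFC DS \<phi>"
  obtains M where "\<And>C \<tau> x d t. norm x \<le> C \<Longrightarrow> d \<in> DS \<Longrightarrow> 0 \<le> t \<Longrightarrow> t \<le> \<tau> \<Longrightarrow> norm (\<phi> t x d) \<le> M C \<tau>"
proof -
  define M where "M C \<tau> = (SOME M. \<forall>x d t. norm x \<le> max C 1 \<longrightarrow> d \<in> DS \<longrightarrow> t \<in> {0..max \<tau> 1} \<longrightarrow> norm (\<phi> t x d) \<le> M)"
    for C \<tau>
  have "norm (\<phi> t x d) \<le> M C \<tau>" if "norm x \<le> C" "d \<in> DS" "0 \<le> t" "t \<le> \<tau>" for C \<tau> x d t
  proof -
    have "\<exists>M. \<forall>x d t. norm x \<le> max C 1 \<longrightarrow> d \<in> DS \<longrightarrow> t \<in> {0..max \<tau> 1} \<longrightarrow> norm (\<phi> t x d) \<le> M"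
      using assms unfolding RFC_def by simp
    from someI_ex[OF this] show ?thesis using that unfolding M_def by fastforce
  qed
  then show thesis by (rule that)
qed

lemma practically_UGAS_of_uniform_transient:
  fixes \<phi> :: "real \<Rightarrow> 'x::real_normed_vector \<Rightarrow> (real \<Rightarrow> 'd) \<Rightarrow> 'x"
  assumes "RFC DS \<phi>" and T: "mono_on {0..} T"
    and transient: "\<And>x d t. d \<in> DS \<Longrightarrow> 0 \<le> t \<Longrightarrow> norm (\<phi> t x d) \<le> c \<or> t \<le> T (norm x)"
  shows "\<exists>\<beta> c. class_KL \<beta> \<and> c > 0 \<and> (\<forall>x. \<forall>d\<in>DS. \<forall>t\<ge>0. norm (\<phi> t x d) \<le> \<beta> (norm x) t + c)"
proof -
  obtain M where M: "\<And>C \<tau> x d t. norm x \<le> C \<Longrightarrow> d \<in> DS \<Longrightarrow> 0 \<le> t \<Longrightarrow> t \<le> \<tau> \<Longrightarrow> norm (\<phi> t x d) \<le> M C \<tau>"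
    using RFC_bound[OF \<open>RFC DS \<phi>\<close>] by blast
  define B where "B n = M (real n) (T (real n))" for n :: nat
  have B: "norm (\<phi> t x d) \<le> B n" if "norm x \<le> real n" "d \<in> DS" "0 \<le> t" "t \<le> T (norm x)" for n x d t
    using M[OF that(1-3)] mono_onD[OF T, of "norm x" "real n"] that by (simp add: B_def)
  obtain \<beta> where KL: "class_KL \<beta>"
    and dominating: "\<And>m r t. real m + 1 \<le> r \<Longrightarrow> max 0 (B (m + 2)) * exp (T (real (m + 2))) * exp (- t) \<le> \<beta> r t"
    using class_KL_dominating[of "\<lambda>m. max 0 (B (m + 2)) * exp (T (real (m + 2)))"] by blast
  define c0 where "c0 = max 0 (max c (B 1)) + 1"
  have "norm (\<phi> t x d) \<le> \<beta> (norm x) t + c0" if d: "d \<in> DS" and t: "0 \<le> t" for x d t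
  proof -
    have "0 \<le> \<beta> (norm x) t" using class_KL_nonneg[OF KL] that by simp
    consider "norm (\<phi> t x d) \<le> c" | "t \<le> T (norm x)" "norm x \<le> 1" | "t \<le> T (norm x)" "1 < norm x"
      using transient[OF d t] by fastforce
    then show ?thesis
    proof cases
      case 2
      then show ?thesis using B[of x 1 d t] d t \<open>0 \<le> \<beta> (norm x) t\<close> by (simp add: c0_def)
    next
      case 3
      define m where "m = nat \<lfloor>norm x\<rfloor> - 1"
      have m: "real m + 1 \<le> norm x" "norm x \<le> real (m + 2)" using 3 unfolding m_def by linarith+
      have "t \<le> T (real (m + 2))" using 3 mono_onD[OF T, of "norm x" "real (m + 2)"] m by simp
      then have "1 \<le> exp (T (real (m + 2)) - t)" by simp
      have "norm (\<phi> t x d) \<le> B (m + 2)" using B[OF m(2) d t 3(1)] .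
      also have "\<dots> \<le> max 0 (B (m + 2)) * exp (T (real (m + 2)) - t)"
        using \<open>1 \<le> exp (T (real (m + 2)) - t)\<close> by (simp add: max_def mult_le_cancel_left1)
      also have "\<dots> = max 0 (B (m + 2)) * exp (T (real (m + 2))) * exp (- t)"
        by (simp add: exp_diff exp_minus field_simps)
      also have "\<dots> \<le> \<beta> (norm x) t" using dominating[OF m(1)] .
      finally show ?thesis by (simp add: c0_def)
    qed (use \<open>0 \<le> \<beta> (norm x) t\<close> in \<open>simp add: c0_def\<close>)
  qed
  then show ?thesis using KL by (intro exI[of _ \<beta>] exI[of _ c0]) (auto simp: c0_def)
qed

locale noncoercive_lyapunov_system =
  fixes Dset :: "'d::real_normed_vector set"
    and DS :: "(real \<Rightarrow> 'd) set"
    and \<phi> :: "real \<Rightarrow> 'x::real_normed_vector \<Rightarrow> (real \<Rightarrow> 'd) \<Rightarrow> 'x"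
    and A :: "'x set"
    and V :: "'x \<Rightarrow> real"
    and \<psi> \<alpha> :: "real \<Rightarrow> real"
  assumes system: "is_system Dset DS \<phi>"
    and V_cont: "continuous_on UNIV V"
    and V_nonneg: "\<And>x. 0 \<le> V x"
    and V_zero: "\<And>x. x \<in> A \<Longrightarrow> V x = 0"
    and \<psi>: "class_K \<psi>"
    and \<alpha>: "class_K \<alpha>"
    and V_pos: "\<And>x. x \<notin> A \<Longrightarrow> 0 < V x"
    and V_upper: "\<And>x. x \<notin> A \<Longrightarrow> V x \<le> \<psi> (infdist x A)"
    and V_dini: "\<And>x d. x \<notin> A \<Longrightarrow> d \<in> DS \<Longrightarrow> dini_deriv \<phi> V x d \<le> ereal (- \<alpha> (infdist x A))"
begin

lemma A_nonempty: "A \<noteq> {}"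
proof
  assume "A = {}"
  then have "0 < V 0" and "V 0 \<le> \<psi> 0" using V_pos V_upper by (auto simp: infdist_def)
  then show False using \<psi> by (simp add: class_K_def)
qed

lemma V_le: "V x \<le> \<psi> (infdist x A)"
  using V_upper[of x] V_zero[of x] class_K_nonneg[OF \<psi> infdist_nonneg, of x A] by (cases "x \<in> A") auto

lemma V_decrease_away_from_A:
  assumes "d \<in> DS" "0 \<le> a" "a \<le> b" "0 < \<rho>"
    and away: "\<And>u. u \<in> {a<..<b} \<Longrightarrow> \<rho> \<le> infdist (\<phi> u x d) A"
  shows "V (\<phi> b x d) + \<alpha> \<rho> / 2 * b \<le> V (\<phi> a x d) + \<alpha> \<rho> / 2 * a"
proof (rule decrease_from_dini_bound)
  have "continuous_on {a..b} (\<lambda>u. \<phi> u x d)"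
    using \<open>0 \<le> a\<close> by (intro continuous_on_subset[OF is_system_continuous[OF system \<open>d \<in> DS\<close>]]) auto
  then show "continuous_on {a..b} (\<lambda>u. V (\<phi> u x d))"
    by (rule continuous_on_compose2[OF V_cont]) auto
  fix u assume u: "u \<in> {a<..<b}"
  then have "0 \<le> u" and "\<rho> \<le> infdist (\<phi> u x d) A" using away \<open>0 \<le> a\<close> by auto
  then have "\<phi> u x d \<notin> A" using \<open>0 < \<rho>\<close> by auto
  have "Liminf (at_right 0) (\<lambda>h. ereal ((V (\<phi> (u + h) x d) - V (\<phi> u x d)) / h))
        = dini_deriv \<phi> V (\<phi> u x d) (\<lambda>s. d (u + s))"
    using dini_deriv_along_trajectory[OF system \<open>d \<in> DS\<close> \<open>0 \<le> u\<close>] by simp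
  also have "\<dots> \<le> ereal (- \<alpha> (infdist (\<phi> u x d) A))"
    using V_dini \<open>\<phi> u x d \<notin> A\<close> is_system_shift[OF system \<open>d \<in> DS\<close> \<open>0 \<le> u\<close>] by blast
  also have "\<dots> \<le> ereal (- \<alpha> \<rho>)"
    using class_K_mono[OF \<alpha>] \<open>0 < \<rho>\<close> \<open>\<rho> \<le> infdist (\<phi> u x d) A\<close> by simp
  also have "\<dots> < ereal (- (\<alpha> \<rho> / 2))"
    using class_K_pos[OF \<alpha> \<open>0 < \<rho>\<close>] by simp
  finally show "Liminf (at_right 0) (\<lambda>h. ereal ((V (\<phi> (u + h) x d) - V (\<phi> u x d)) / h)) < ereal (- (\<alpha> \<rho> / 2))" .
qed fact

lemma recent_visit_or_transient:
  assumes "d \<in> DS" "0 \<le> t"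
  shows "(\<exists>s\<in>{0..t}. infdist (\<phi> s x d) A \<le> 1 \<and> \<alpha> 1 / 2 * (t - s) \<le> \<psi> 1) \<or> \<alpha> 1 / 2 * t \<le> V x"
proof (cases "\<exists>s\<in>{0..t}. infdist (\<phi> s x d) A \<le> 1")
  case True
  then obtain s where "s \<in> {0..t}" "infdist (\<phi> s x d) A \<le> 1" by blast
  moreover have "continuous_on {0..t} (\<lambda>u. infdist (\<phi> u x d) A)"
    by (intro continuous_on_infdist continuous_on_subset[OF is_system_continuous[OF system \<open>d \<in> DS\<close>]]) auto
  ultimately obtain s0 where s0: "s0 \<in> {0..t}" "infdist (\<phi> s0 x d) A \<le> 1"
    and after: "\<And>u. u \<in> {s0<..t} \<Longrightarrow> 1 < infdist (\<phi> u x d) A"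
    using last_time_below by blast
  have "V (\<phi> t x d) + \<alpha> 1 / 2 * t \<le> V (\<phi> s0 x d) + \<alpha> 1 / 2 * s0"
    using s0 after by (intro V_decrease_away_from_A \<open>d \<in> DS\<close>) (auto intro: less_imp_le)
  moreover have "V (\<phi> s0 x d) \<le> \<psi> 1"
    using V_le class_K_mono[OF \<psi> infdist_nonneg s0(2)] order_trans by blast
  ultimately have "\<alpha> 1 / 2 * (t - s0) \<le> \<psi> 1"
    using V_nonneg[of "\<phi> t x d"] by (simp add: algebra_simps)
  then show ?thesis using s0 by blast
next
  case False
  then have "V (\<phi> t x d) + \<alpha> 1 / 2 * t \<le> V (\<phi> 0 x d) + \<alpha> 1 / 2 * 0"
    by (intro V_decrease_away_from_A \<open>d \<in> DS\<close> \<open>0 \<le> t\<close>) (auto simp: not_le intro: less_imp_le)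
  then show ?thesis
    using V_nonneg[of "\<phi> t x d"] is_system_initial[OF system \<open>d \<in> DS\<close>] by simp
qed

lemma bounded_or_transient:
  assumes "RFC DS \<phi>" and "bounded A"
  obtains c where "\<And>x d t. d \<in> DS \<Longrightarrow> 0 \<le> t \<Longrightarrow> norm (\<phi> t x d) \<le> c \<or> \<alpha> 1 / 2 * t \<le> V x"
proof -
  obtain M where M: "\<And>C \<tau> x d t. norm x \<le> C \<Longrightarrow> d \<in> DS \<Longrightarrow> 0 \<le> t \<Longrightarrow> t \<le> \<tau> \<Longrightarrow> norm (\<phi> t x d) \<le> M C \<tau>"
    using RFC_bound[OF \<open>RFC DS \<phi>\<close>] by blast
  obtain R where R: "\<And>y. norm y \<le> infdist y A + R"
    using infdist_bounded_set[OF \<open>bounded A\<close> A_nonempty] by blast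
  have "\<alpha> 1 > 0" using class_K_pos[OF \<alpha>] by simp
  have "norm (\<phi> t x d) \<le> M (1 + R) (2 * \<psi> 1 / \<alpha> 1)"
    if "d \<in> DS" "s \<in> {0..t}" "infdist (\<phi> s x d) A \<le> 1" "\<alpha> 1 / 2 * (t - s) \<le> \<psi> 1" for x d s t
  proof -
    have "\<phi> t x d = \<phi> (t - s) (\<phi> s x d) (\<lambda>u. d (s + u))"
      using is_system_cocycle[OF system \<open>d \<in> DS\<close>, of s "t - s"] that(2) by simp
    moreover have "norm (\<phi> s x d) \<le> 1 + R" using R[of "\<phi> s x d"] that(3) by simp
    moreover have "t - s \<le> 2 * \<psi> 1 / \<alpha> 1" using that(4) \<open>\<alpha> 1 > 0\<close> by (simp add: field_simps)
    ultimately show ?thesis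
      using M is_system_shift[OF system \<open>d \<in> DS\<close>, of s] that(2) by simp
  qed
  then show thesis
    using recent_visit_or_transient by (intro that[of "M (1 + R) (2 * \<psi> 1 / \<alpha> 1)"]) blast
qed

end

theorem corollary24:
  fixes Dset :: "'d::real_normed_vector set"
    and DS :: "(real \<Rightarrow> 'd) set"
    and \<phi> :: "real \<Rightarrow> 'x::real_normed_vector \<Rightarrow> (real \<Rightarrow> 'd) \<Rightarrow> 'x"
    and A :: "'x set"
  assumes "is_system Dset DS \<phi>"
    and "RFC DS \<phi>"
    and "bounded A"
    and "\<exists>V. noncoercive_lyapunov DS \<phi> A V"
  shows "\<exists>\<beta> c. class_KL \<beta> \<and> c > 0 \<and>
           (\<forall>x. \<forall>d\<in>DS. \<forall>t\<ge>0. norm (\<phi> t x d) \<le> \<beta> (norm x) t + c)"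
proof -
  obtain V \<psi> \<alpha> where "noncoercive_lyapunov_system Dset DS \<phi> A V \<psi> \<alpha>"
    using assms(1,4) unfolding noncoercive_lyapunov_def noncoercive_lyapunov_system_def class_K_inf_def
    by blast
  then interpret noncoercive_lyapunov_system Dset DS \<phi> A V \<psi> \<alpha> .
  obtain c where transient: "\<And>x d t. d \<in> DS \<Longrightarrow> 0 \<le> t \<Longrightarrow> norm (\<phi> t x d) \<le> c \<or> \<alpha> 1 / 2 * t \<le> V x"
    using bounded_or_transient[OF assms(2,3)] by blast
  obtain R where R: "\<And>x. infdist x A \<le> norm x + R"
    using infdist_bounded_set[OF assms(3) A_nonempty] by blast
  have "0 \<le> R" using R[of 0] infdist_nonneg[of 0 A] by simp
  have "\<alpha> 1 > 0" using class_K_pos[OF \<alpha>] by simp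
  define T where "T r = 2 * \<psi> (r + R) / \<alpha> 1" for r
  have "mono_on {0..} T"
    using class_K_mono[OF \<psi>] \<open>0 \<le> R\<close> \<open>\<alpha> 1 > 0\<close>
    by (intro mono_onI) (simp add: T_def divide_right_mono)
  moreover have "norm (\<phi> t x d) \<le> c \<or> t \<le> T (norm x)" if "d \<in> DS" "0 \<le> t" for x d t
  proof -
    have "V x \<le> \<psi> (norm x + R)"
      using V_le[of x] class_K_mono[OF \<psi> infdist_nonneg R] by (rule order_trans)
    then show ?thesis
      using transient[OF that, of x] \<open>\<alpha> 1 > 0\<close> by (auto simp: T_def field_simps)
  qed
  ultimately show ?thesis by (rule practically_UGAS_of_uniform_transient[OF assms(2)])
qed

end
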